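(* Let $X$ be a rearrangement invariant space on $\mathbb N$ with the Fatou property. Then for every $f\in X$, $$\operatorname{dist}_X(f^*,X_a)=\operatorname{dist}_X(f,X_a).$$
   Context: A rearrangement invariant space on $\mathbb N$ (counting measure) is a Banach space $X$ of real sequences such that $|x|\le|y|$ coordinatewise, $y\in X$ imply $x\in X$, $\|x\|_X\le\|y\|_X$, containing a sequence with all coordinates nonzero, and such that whenever $x\in X$ and $y$ has the same distribution function as $x$ ($d_x(\lambda)=\#\{n:|x_n|>\lambda\}$), then $y\in X$ and $\|y\|_X=\|x\|_X$. Fatou property: if $0\le x^{(n)}\uparrow x$ coordinatewise, $x^{(n)}\in X$, $\sup_n\|x^{(n)}\|_X<\infty$, then $x\in X$ and $\|x^{(n)}\|_X\uparrow\|x\|_X$. The non-increasing rearrangement is $f^*=(f^*_n)$ with $f^*_n=\inf\{\lambda>0:d_f(\lambda)<n\}$. $X_a$ is the ideal of order continuous elements: $x\in X_a$ iff for every sequence $0\le x^{(n)}\le|x|$ with $x^{(n)}\downarrow0$ coordinatewise one has $\|x^{(n)}\|_X\to0$. $\operatorname{dist}_X(h,X_a)=\inf\{\|h-g\|_X:g\in X_a\}$. *)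

theory Defs
  imports "HOL-Analysis.Analysis" "HOL-Library.Extended_Nat"
begin

type_synonym seq = "nat \<Rightarrow> real"

definition distf :: "seq \<Rightarrow> real \<Rightarrow> enat" where
  "distf x t = (if finite {n. \<bar>x n\<bar> > t} then enat (card {n. \<bar>x n\<bar> > t}) else \<infinity>)"

definition equidist :: "seq \<Rightarrow> seq \<Rightarrow> bool" where
  "equidist x y \<longleftrightarrow> (\<forall>t. distf x t = distf y t)"

text \<open>Non-increasing rearrangement; index shifted by one: decrearr f k = f^*_(k+1).\<close>
definition decrearr :: "seq \<Rightarrow> seq" where
  "decrearr f k = Inf {t::real. t > 0 \<and> distf f t < enat (Suc k)}"

definition banach_seq_space :: "seq set \<Rightarrow> (seq \<Rightarrow> real) \<Rightarrow> bool" where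
  "banach_seq_space S N \<longleftrightarrow>
     (\<lambda>n. 0) \<in> S \<and> (\<forall>x\<in>S. \<forall>y\<in>S. (\<lambda>n. x n + y n) \<in> S) \<and> (\<forall>c::real. \<forall>x\<in>S. (\<lambda>n. c * x n) \<in> S) \<and>
     (\<forall>x\<in>S. N x \<ge> 0) \<and> (\<forall>x\<in>S. N x = 0 \<longleftrightarrow> x = (\<lambda>n. 0)) \<and>
     (\<forall>c. \<forall>x\<in>S. N (\<lambda>n. c * x n) = \<bar>c\<bar> * N x) \<and>
     (\<forall>x\<in>S. \<forall>y\<in>S. N (\<lambda>n. x n + y n) \<le> N x + N y) \<and>
     (\<forall>xs. (\<forall>k. xs k \<in> S) \<and> (\<forall>e>0. \<exists>M. \<forall>m\<ge>M. \<forall>n\<ge>M. N (\<lambda>i. xs m i - xs n i) < e)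
        \<longrightarrow> (\<exists>x\<in>S. (\<lambda>k. N (\<lambda>i. xs k i - x i)) \<longlonglongrightarrow> 0))"

definition ri_space :: "seq set \<Rightarrow> (seq \<Rightarrow> real) \<Rightarrow> bool" where
  "ri_space S N \<longleftrightarrow> banach_seq_space S N \<and>
     (\<forall>x y. y \<in> S \<and> (\<forall>n. \<bar>x n\<bar> \<le> \<bar>y n\<bar>) \<longrightarrow> x \<in> S \<and> N x \<le> N y) \<and>
     (\<exists>x\<in>S. \<forall>n. x n \<noteq> 0) \<and>
     (\<forall>x y. x \<in> S \<and> equidist x y \<longrightarrow> y \<in> S \<and> N y = N x)"

definition fatou :: "seq set \<Rightarrow> (seq \<Rightarrow> real) \<Rightarrow> bool" where
  "fatou S N \<longleftrightarrow>
     (\<forall>(xs :: nat \<Rightarrow> seq) x. (\<forall>k. xs k \<in> S) \<and> (\<forall>k n. 0 \<le> xs k n) \<and>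
        (\<forall>n. incseq (\<lambda>k. xs k n)) \<and> (\<forall>n. (\<lambda>k. xs k n) \<longlonglongrightarrow> x n) \<and>
        bdd_above (range (\<lambda>k. N (xs k)))
      \<longrightarrow> x \<in> S \<and> incseq (\<lambda>k. N (xs k)) \<and> (\<lambda>k. N (xs k)) \<longlonglongrightarrow> N x)"

definition ord_cont_part :: "seq set \<Rightarrow> (seq \<Rightarrow> real) \<Rightarrow> seq set" where
  "ord_cont_part S N = {x \<in> S. \<forall>(xs :: nat \<Rightarrow> seq).
      (\<forall>k n. 0 \<le> xs k n \<and> xs k n \<le> \<bar>x n\<bar>) \<and> (\<forall>n. decseq (\<lambda>k. xs k n)) \<and>
      (\<forall>n. (\<lambda>k. xs k n) \<longlonglongrightarrow> 0) \<longrightarrow> (\<lambda>k. N (xs k)) \<longlonglongrightarrow> 0}"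

definition dist_Xa :: "seq set \<Rightarrow> (seq \<Rightarrow> real) \<Rightarrow> seq \<Rightarrow> real" where
  "dist_Xa S N h = (INF g\<in>ord_cont_part S N. N (\<lambda>i. h i - g i))"

end

theory Submission
  imports Defs
begin

(* Every element of an r.i. space on the naturals is bounded (compare it with multiples of unit
   vectors, which all have the same norm), so f* is defined and equimeasurable with f.
   Finitely supported sequences are order continuous and the tails of an order continuous
   element tend to 0 in norm, hence dist(h, X_a) is the infimum over m of the norms of the
   tails h 1_[m,oo).  In an r.i. space domination in distribution implies domination in norm
   (compare decreasing rearrangements and use solidity).  Finally the tails of f and of f*
   dominate each other in distribution: the m-th tail of f* has distribution function
   d_f - m, which is at most that of the m-th tail of f, and for every m some tail of f has
   distribution function at most d_f - m.  So the two infima coincide. *)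

section \<open>Distribution functions\<close>

lemma distf_eq_card: "finite {n. t < \<bar>x n\<bar>} \<Longrightarrow> distf x t = enat (card {n. t < \<bar>x n\<bar>})"
  unfolding distf_def by simp

lemma distf_eq_infinity: "infinite {n. t < \<bar>x n\<bar>} \<Longrightarrow> distf x t = \<infinity>"
  unfolding distf_def by simp

lemma distf_eq_zero_iff: "distf x t = 0 \<longleftrightarrow> (\<forall>n. \<bar>x n\<bar> \<le> t)"
proof
  assume "distf x t = 0"
  then have "finite {n. t < \<bar>x n\<bar>}" and "card {n. t < \<bar>x n\<bar>} = 0"
    by (auto simp: distf_def zero_enat_def split: if_splits)
  then show "\<forall>n. \<bar>x n\<bar> \<le> t" by (simp add: not_less)
next
  assume "\<forall>n. \<bar>x n\<bar> \<le> t"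
  then have "{n. t < \<bar>x n\<bar>} = {}" by (simp add: not_less)
  then show "distf x t = 0" by (simp add: distf_eq_card zero_enat_def)
qed

lemma card_le_distf:
  assumes "finite F" and "F \<subseteq> {n. t < \<bar>x n\<bar>}"
  shows "enat (card F) \<le> distf x t"
proof (cases "finite {n. t < \<bar>x n\<bar>}")
  case True
  then show ?thesis using assms by (simp add: distf_eq_card card_mono)
qed (simp add: distf_eq_infinity)

lemma distf_antimono:
  assumes "s \<le> t"
  shows "distf x t \<le> distf x s"
proof -
  have sub: "{n. t < \<bar>x n\<bar>} \<subseteq> {n. s < \<bar>x n\<bar>}" using assms by auto
  show ?thesis
  proof (cases "finite {n. t < \<bar>x n\<bar>}")
    case True
    with sub show ?thesis by (simp add: distf_eq_card card_le_distf)
  next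
    case False
    with sub have "infinite {n. s < \<bar>x n\<bar>}" using finite_subset by blast
    then show ?thesis by (simp add: distf_eq_infinity)
  qed
qed

lemma enat_less_Suc_iff: "x < enat (Suc k) \<longleftrightarrow> x \<le> enat k"
  by (cases x) auto

lemma distf_right_cont:
  assumes "enat k < distf x t"
  obtains s where "t < s" and "enat k < distf x s"
proof -
  obtain F where F: "F \<subseteq> {n. t < \<bar>x n\<bar>}" "finite F" "card F = Suc k"
  proof (cases "finite {n. t < \<bar>x n\<bar>}")
    case True
    with assms have "Suc k \<le> card {n. t < \<bar>x n\<bar>}" by (simp add: distf_eq_card)
    then show ?thesis using that obtain_subset_with_card_n by metis
  next
    case False
    then show ?thesis using that infinite_arbitrarily_large by metis
  qed
  define \<delta> where "\<delta> = Min ((\<lambda>n. \<bar>x n\<bar>) ` F)"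
  have "F \<noteq> {}" using F by auto
  then have "t < \<delta>" using F unfolding \<delta>_def by auto
  have "F \<subseteq> {n. (t + \<delta>) / 2 < \<bar>x n\<bar>}"
  proof
    fix n assume "n \<in> F"
    then have "\<delta> \<le> \<bar>x n\<bar>" using F unfolding \<delta>_def by simp
    with \<open>t < \<delta>\<close> show "n \<in> {n. (t + \<delta>) / 2 < \<bar>x n\<bar>}" by simp
  qed
  then have "enat (Suc k) \<le> distf x ((t + \<delta>) / 2)"
    using card_le_distf[OF F(2)] F(3) by simp
  show ?thesis
  proof (rule that)
    show "t < (t + \<delta>) / 2" using \<open>t < \<delta>\<close> by simp
    show "enat k < distf x ((t + \<delta>) / 2)"
      using \<open>enat (Suc k) \<le> distf x ((t + \<delta>) / 2)\<close> by (simp add: Suc_ile_eq)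
  qed
qed

lemma distf_comp_bij:
  assumes "bij \<sigma>"
  shows "distf (x \<circ> \<sigma>) t = distf x t"
proof -
  have "bij_betw \<sigma> {n \<in> UNIV. t < \<bar>(x \<circ> \<sigma>) n\<bar>} {n \<in> UNIV. t < \<bar>x n\<bar>}"
    using assms by (intro bij_betw_Collect) auto
  then have "bij_betw \<sigma> {n. t < \<bar>(x \<circ> \<sigma>) n\<bar>} {n. t < \<bar>x n\<bar>}"
    by (simp only: UNIV_I simp_thms)
  then show ?thesis
    unfolding distf_def by (simp add: bij_betw_finite bij_betw_same_card)
qed

lemma equidist_abs: "equidist x (\<lambda>n. \<bar>x n\<bar>)"
  by (simp add: equidist_def distf_def)

definition seq_tail :: "nat \<Rightarrow> seq \<Rightarrow> seq" where
  "seq_tail m x n = (if n < m then 0 else x n)"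

lemma distf_diff_le_distf_tail: "distf x t - enat m \<le> distf (seq_tail m x) t"
proof -
  let ?P = "{n. t < \<bar>x n\<bar>}" and ?T = "{n. t < \<bar>seq_tail m x n\<bar>}"
  have sub: "?P - {..<m} \<subseteq> ?T" by (auto simp: seq_tail_def)
  show ?thesis
  proof (cases "finite ?T")
    case True
    then have "finite (?P - {..<m})" using sub finite_subset by blast
    then have "finite ?P" by (metis Diff_infinite_finite finite_lessThan)
    have "card ?P - m \<le> card (?P - {..<m})" using diff_card_le_card_Diff[of "{..<m}" ?P] by simp
    also have "\<dots> \<le> card ?T" using True sub by (rule card_mono)
    finally show ?thesis using True \<open>finite ?P\<close> by (simp add: distf_eq_card)
  qed (simp add: distf_eq_infinity)
qed

section \<open>Decreasing rearrangement of a bounded sequence\<close>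

locale bounded_seq =
  fixes f :: seq and B :: real
  assumes bounded: "\<And>n. \<bar>f n\<bar> \<le> B"
begin

lemma bound_nonneg: "0 \<le> B"
  using bounded[of 0] by linarith

lemma decrearr_set_nonempty: "{t. 0 < t \<and> distf f t < enat (Suc k)} \<noteq> {}"
proof -
  have "\<bar>f n\<bar> \<le> B + 1" for n using bounded[of n] by linarith
  then have "distf f (B + 1) = 0" by (simp add: distf_eq_zero_iff)
  then have "B + 1 \<in> {t. 0 < t \<and> distf f t < enat (Suc k)}"
    using bound_nonneg by (simp add: zero_enat_def)
  then show ?thesis by blast
qed

lemma decrearr_nonneg: "0 \<le> decrearr f k"
  unfolding decrearr_def using decrearr_set_nonempty by (intro cInf_greatest) auto

lemma less_decrearr_iff:
  assumes "0 \<le> t"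
  shows "t < decrearr f k \<longleftrightarrow> enat k < distf f t"
proof -
  define A where "A = {t. 0 < t \<and> distf f t < enat (Suc k)}"
  have "A \<noteq> {}" unfolding A_def by (rule decrearr_set_nonempty)
  have "bdd_below A" unfolding A_def by (rule bdd_belowI[of _ 0]) auto
  have "decrearr f k = Inf A" unfolding A_def decrearr_def ..
  show ?thesis
  proof
    assume "t < decrearr f k"
    show "enat k < distf f t"
    proof (rule ccontr)
      assume "\<not> enat k < distf f t"
      then have "distf f s < enat (Suc k)" if "t < s" for s
        using that distf_antimono[of t s f] by (simp add: enat_less_Suc_iff)
      then have "Inf A \<le> s" if "t < s" for s
        using that assms \<open>bdd_below A\<close> by (intro cInf_lower) (auto simp: A_def)
      then have "Inf A \<le> t" by (rule dense_ge)
      with \<open>t < decrearr f k\<close> \<open>decrearr f k = Inf A\<close> show False by simp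
    qed
  next
    assume "enat k < distf f t"
    then obtain s where "t < s" and "enat k < distf f s" by (rule distf_right_cont)
    have "s \<le> r" if "r \<in> A" for r
    proof (rule ccontr)
      assume "\<not> s \<le> r"
      then have "distf f s \<le> distf f r" by (simp add: distf_antimono)
      with \<open>enat k < distf f s\<close> \<open>r \<in> A\<close> show False
        by (simp add: A_def enat_less_Suc_iff) (meson leD order_trans)
    qed
    then have "s \<le> Inf A" using \<open>A \<noteq> {}\<close> by (intro cInf_greatest)
    with \<open>t < s\<close> \<open>decrearr f k = Inf A\<close> show "t < decrearr f k" by simp
  qed
qed

lemma decrearr_superlevel_set:
  "0 \<le> t \<Longrightarrow> {n. t < \<bar>decrearr f n\<bar>} = {n. enat n < distf f t}"
  using less_decrearr_iff decrearr_nonneg by auto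

lemma distf_decrearr: "distf (decrearr f) t = distf f t"
proof (cases "0 \<le> t")
  case True
  show ?thesis
  proof (cases "distf f t")
    case (enat d)
    then have "{n. enat n < distf f t} = {..<d}" by auto
    then show ?thesis using enat True by (simp add: decrearr_superlevel_set distf_eq_card)
  next
    case infinity
    then show ?thesis using True by (simp add: decrearr_superlevel_set distf_eq_infinity)
  qed
next
  case False
  then have "{n. t < \<bar>x n\<bar>} = UNIV" for x :: seq by auto
  then show ?thesis by (simp add: distf_eq_infinity)
qed

lemma equidist_decrearr: "equidist f (decrearr f)"
  unfolding equidist_def by (simp add: distf_decrearr)

lemma distf_tail_decrearr:
  assumes "0 \<le> t"
  shows "distf (seq_tail m (decrearr f)) t = distf f t - enat m"
proof -
  have level: "{n. t < \<bar>seq_tail m (decrearr f) n\<bar>} = {n. m \<le> n \<and> enat n < distf f t}"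
    using decrearr_superlevel_set[OF assms] assms by (auto simp: seq_tail_def)
  show ?thesis
  proof (cases "distf f t")
    case (enat d)
    then have "{n. m \<le> n \<and> enat n < distf f t} = {m..<d}" by auto
    then show ?thesis using level enat by (simp add: distf_eq_card)
  next
    case infinity
    then have "{n. m \<le> n \<and> enat n < distf f t} = {m..}" by auto
    then show ?thesis using level infinity by (simp add: distf_eq_infinity infinite_Ici)
  qed
qed

(* u is some value f*_k < f*_m if there is one, and f*_m otherwise. *)
lemma exists_level_distf_finite:
  "\<exists>u\<ge>0. distf f u \<noteq> \<infinity> \<and> (enat m \<le> distf f u \<or> (\<forall>t. 0 \<le> t \<and> t < u \<longrightarrow> distf f t = \<infinity>))"
proof (cases "\<exists>k. decrearr f k < decrearr f m")
  case True
  then obtain k where k: "decrearr f k < decrearr f m" by blast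
  let ?u = "decrearr f k"
  have "0 \<le> ?u" by (rule decrearr_nonneg)
  have "distf f ?u \<le> enat k" using less_decrearr_iff[OF \<open>0 \<le> ?u\<close>, of k] by simp
  then have "distf f ?u \<noteq> \<infinity>" by (cases "distf f ?u") simp_all
  moreover have "enat m < distf f ?u" using less_decrearr_iff[OF \<open>0 \<le> ?u\<close>, of m] k by simp
  ultimately show ?thesis using \<open>0 \<le> ?u\<close> by (intro exI[of _ ?u]) auto
next
  case False
  let ?u = "decrearr f m"
  have "0 \<le> ?u" by (rule decrearr_nonneg)
  have "distf f ?u \<le> enat m" using less_decrearr_iff[OF \<open>0 \<le> ?u\<close>, of m] by simp
  then have "distf f ?u \<noteq> \<infinity>" by (cases "distf f ?u") simp_all
  moreover have "distf f t = \<infinity>" if "0 \<le> t" and "t < ?u" for t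
  proof -
    have "enat k < distf f t" for k
    proof -
      have "?u \<le> decrearr f k" using False by (simp add: not_less)
      with \<open>t < ?u\<close> have "t < decrearr f k" by simp
      then show ?thesis by (rule less_decrearr_iff[OF \<open>0 \<le> t\<close>, THEN iffD1])
    qed
    then show ?thesis by (cases "distf f t") auto
  qed
  ultimately show ?thesis using \<open>0 \<le> ?u\<close> by (intro exI[of _ ?u]) auto
qed

lemma exists_tail_distf_le: "\<exists>m'. \<forall>t\<ge>0. distf (seq_tail m' f) t \<le> distf f t - enat m"
proof -
  obtain u where "0 \<le> u" and "distf f u \<noteq> \<infinity>"
    and u: "enat m \<le> distf f u \<or> (\<forall>t. 0 \<le> t \<and> t < u \<longrightarrow> distf f t = \<infinity>)"
    using exists_level_distf_finite by blast
  define E where "E = {n. u < \<bar>f n\<bar>}"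
  have "finite E" using \<open>distf f u \<noteq> \<infinity>\<close> unfolding E_def distf_def by (auto split: if_splits)
  then obtain m' where "E \<subseteq> {..<m'}" by (auto simp: finite_nat_iff_bounded)
  have "distf (seq_tail m' f) t \<le> distf f t - enat m" if "0 \<le> t" for t
  proof (cases "u \<le> t")
    case True
    then have "\<bar>seq_tail m' f n\<bar> \<le> t" for n
      using \<open>E \<subseteq> {..<m'}\<close> \<open>0 \<le> t\<close> by (force simp: seq_tail_def E_def)
    then have "distf (seq_tail m' f) t = 0" by (simp add: distf_eq_zero_iff)
    then show ?thesis by simp
  next
    case False
    let ?P = "{n. t < \<bar>f n\<bar>}" and ?T = "{n. t < \<bar>seq_tail m' f n\<bar>}"
    show ?thesis
    proof (cases "finite ?P")
      case True
      then have "distf f t \<noteq> \<infinity>" by (simp add: distf_eq_card)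
      then have "enat m \<le> enat (card E)"
        using u False \<open>0 \<le> t\<close> \<open>finite E\<close> by (auto simp: E_def distf_eq_card)
      have "E \<subseteq> ?P" using False by (auto simp: E_def)
      have "?T \<subseteq> ?P - E" using \<open>E \<subseteq> {..<m'}\<close> \<open>0 \<le> t\<close> by (auto simp: seq_tail_def)
      then have "card ?T \<le> card (?P - E)" using True by (intro card_mono) auto
      also have "\<dots> = card ?P - card E" using \<open>finite E\<close> \<open>E \<subseteq> ?P\<close> by (rule card_Diff_subset)
      finally show ?thesis
        using True \<open>enat m \<le> enat (card E)\<close> finite_subset[OF \<open>?T \<subseteq> ?P - E\<close>]
        by (simp add: distf_eq_card)
    qed (simp add: distf_eq_infinity)
  qed
  then show ?thesis by blast
qed

end

lemma decrearr_mono: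
  assumes g: "bounded_seq g Bg" and h: "bounded_seq h Bh"
    and distf_le: "\<And>t. 0 \<le> t \<Longrightarrow> distf g t \<le> distf h t"
  shows "decrearr g k \<le> decrearr h k"
proof (rule ccontr)
  let ?t = "decrearr h k"
  have "0 \<le> ?t" by (rule bounded_seq.decrearr_nonneg[OF h])
  assume "\<not> decrearr g k \<le> ?t"
  then have "?t < decrearr g k" by simp
  then have "enat k < distf g ?t"
    by (rule bounded_seq.less_decrearr_iff[OF g \<open>0 \<le> ?t\<close>, THEN iffD1])
  also have "\<dots> \<le> distf h ?t" using \<open>0 \<le> ?t\<close> by (rule distf_le)
  finally have "?t < ?t"
    by (rule bounded_seq.less_decrearr_iff[OF h \<open>0 \<le> ?t\<close>, THEN iffD2])
  then show False by simp
qed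

section \<open>Rearrangement invariant spaces\<close>

lemma ord_cont_part_subset: "ord_cont_part S N \<subseteq> S"
  by (auto simp: ord_cont_part_def)

lemma ord_cont_partD:
  assumes "x \<in> ord_cont_part S N"
    and "\<And>k n. 0 \<le> xs k n" and "\<And>k n. xs k n \<le> \<bar>x n\<bar>"
    and "\<And>n. decseq (\<lambda>k. xs k n)" and "\<And>n. (\<lambda>k. xs k n) \<longlonglongrightarrow> 0"
  shows "(\<lambda>k. N (xs k)) \<longlonglongrightarrow> 0"
  using assms unfolding ord_cont_part_def by blast

context
  fixes S :: "seq set" and N :: "seq \<Rightarrow> real"
  assumes ri_space: "ri_space S N"
begin

lemma ri_banach: "banach_seq_space S N"
  using ri_space[unfolded ri_space_def, THEN conjunct1] .

lemma ri_zero_mem: "(\<lambda>n. 0) \<in> S"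
  using ri_banach unfolding banach_seq_space_def by blast

lemma ri_add_mem: "x \<in> S \<Longrightarrow> y \<in> S \<Longrightarrow> (\<lambda>n. x n + y n) \<in> S"
  using ri_banach unfolding banach_seq_space_def by blast

lemma ri_scale_mem: "x \<in> S \<Longrightarrow> (\<lambda>n. c * x n) \<in> S"
  using ri_banach unfolding banach_seq_space_def by blast

lemma ri_norm_nonneg: "x \<in> S \<Longrightarrow> 0 \<le> N x"
  using ri_banach unfolding banach_seq_space_def by blast

lemma ri_norm_eq_zero_iff: "x \<in> S \<Longrightarrow> N x = 0 \<longleftrightarrow> x = (\<lambda>n. 0)"
  using ri_banach unfolding banach_seq_space_def by blast

lemma ri_norm_scale: "x \<in> S \<Longrightarrow> N (\<lambda>n. c * x n) = \<bar>c\<bar> * N x"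
  using ri_banach unfolding banach_seq_space_def by blast

lemma ri_norm_triangle: "x \<in> S \<Longrightarrow> y \<in> S \<Longrightarrow> N (\<lambda>n. x n + y n) \<le> N x + N y"
  using ri_banach unfolding banach_seq_space_def by blast

lemma ri_solid:
  assumes "y \<in> S" and "\<And>n. \<bar>x n\<bar> \<le> \<bar>y n\<bar>"
  shows "x \<in> S" and "N x \<le> N y"
  using ri_space[unfolded ri_space_def, THEN conjunct2, THEN conjunct1] assms by blast+

lemma ri_nowhere_zero: "\<exists>x\<in>S. \<forall>n. x n \<noteq> 0"
  using ri_space[unfolded ri_space_def, THEN conjunct2, THEN conjunct2, THEN conjunct1] .

lemma ri_equidist:
  assumes "x \<in> S" and "equidist x y"
  shows "y \<in> S" and "N y = N x"
  using ri_space[unfolded ri_space_def, THEN conjunct2, THEN conjunct2, THEN conjunct2] assms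
  by blast+

lemma ri_diff_mem:
  assumes "x \<in> S" and "y \<in> S"
  shows "(\<lambda>n. x n - y n) \<in> S"
proof -
  have "(\<lambda>n. x n + (-1) * y n) \<in> S" using assms by (intro ri_add_mem ri_scale_mem)
  then show ?thesis by simp
qed

lemma ri_norm_abs: "x \<in> S \<Longrightarrow> N (\<lambda>n. \<bar>x n\<bar>) = N x"
  by (rule ri_equidist(2)[OF _ equidist_abs])

lemma seq_tail_mem: "x \<in> S \<Longrightarrow> seq_tail m x \<in> S"
  by (erule ri_solid(1)) (simp add: seq_tail_def)

lemma norm_seq_tail_le: "x \<in> S \<Longrightarrow> N (seq_tail m x) \<le> N x"
  by (erule ri_solid(2)) (simp add: seq_tail_def)

lemma indicator_singleton_mem: "(indicator {k} :: seq) \<in> S"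
  and norm_indicator_singleton: "N (indicator {k}) = N (indicator {0})"
proof -
  obtain z where "z \<in> S" and z: "\<And>n. z n \<noteq> 0" using ri_nowhere_zero by blast
  from \<open>z \<in> S\<close> have "(\<lambda>n. (1 / \<bar>z 0\<bar>) * z n) \<in> S" by (rule ri_scale_mem)
  moreover have "\<bar>indicator {0} n\<bar> \<le> \<bar>(1 / \<bar>z 0\<bar>) * z n\<bar>" for n :: nat
    using z[of 0] by (cases "n = 0") (simp_all add: abs_mult)
  ultimately have "(indicator {0} :: seq) \<in> S" by (rule ri_solid(1))
  moreover have "indicator {k} = (indicator {0} :: seq) \<circ> Transposition.transpose 0 k"
    by (auto simp: fun_eq_iff indicator_def Transposition.transpose_def)
  then have "equidist (indicator {0}) (indicator {k} :: seq)"
    by (simp add: equidist_def distf_comp_bij)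
  ultimately show "(indicator {k} :: seq) \<in> S" and "N (indicator {k}) = N (indicator {0})"
    by (rule ri_equidist)+
qed

lemma norm_indicator_singleton_pos: "0 < N (indicator {k})"
proof -
  have "(indicator {k} :: seq) \<noteq> (\<lambda>n. 0)" by (metis indicator_simps(1) singletonI zero_neq_one)
  then have "N (indicator {k}) \<noteq> 0"
    using ri_norm_eq_zero_iff[OF indicator_singleton_mem[of k]] by simp
  with ri_norm_nonneg[OF indicator_singleton_mem[of k]] show ?thesis by simp
qed

lemma ri_coordinate_bound:
  assumes "x \<in> S"
  shows "\<bar>x k\<bar> \<le> N x / N (indicator {0})"
proof -
  have "\<bar>\<bar>x k\<bar> * indicator {k} n\<bar> \<le> \<bar>x n\<bar>" for n by (auto simp: indicator_def)
  with assms have "N (\<lambda>n. \<bar>x k\<bar> * indicator {k} n) \<le> N x" by (rule ri_solid(2))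
  then have "\<bar>x k\<bar> * N (indicator {0}) \<le> N x"
    by (simp add: ri_norm_scale[OF indicator_singleton_mem] norm_indicator_singleton[of k])
  then show ?thesis
    using norm_indicator_singleton_pos by (simp add: pos_le_divide_eq)
qed

lemma ri_bounded_seq: "x \<in> S \<Longrightarrow> bounded_seq x (N x / N (indicator {0}))"
  by unfold_locales (rule ri_coordinate_bound)

lemma ri_decrearr:
  assumes "x \<in> S"
  shows "decrearr x \<in> S" and "N (decrearr x) = N x"
proof -
  have "equidist x (decrearr x)"
    by (rule bounded_seq.equidist_decrearr[OF ri_bounded_seq[OF assms]])
  with assms show "decrearr x \<in> S" and "N (decrearr x) = N x"
    by (rule ri_equidist)+
qed

lemma ri_le_of_distf_le:
  assumes "h \<in> S" and distf_le: "\<And>t. 0 \<le> t \<Longrightarrow> distf g t \<le> distf h t"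
  shows "g \<in> S" and "N g \<le> N h"
proof -
  define B where "B = N h / N (indicator {0})"
  have h: "bounded_seq h B" unfolding B_def using \<open>h \<in> S\<close> by (rule ri_bounded_seq)
  then have "distf h B = 0" by (simp add: distf_eq_zero_iff bounded_seq_def)
  then have "distf g B = 0"
    using distf_le[of B] bounded_seq.bound_nonneg[OF h] by simp
  then have g: "bounded_seq g B" by (simp add: distf_eq_zero_iff bounded_seq_def)
  have le: "\<bar>decrearr g n\<bar> \<le> \<bar>decrearr h n\<bar>" for n
    using decrearr_mono[OF g h distf_le] bounded_seq.decrearr_nonneg[OF g]
      bounded_seq.decrearr_nonneg[OF h] by simp
  have "decrearr g \<in> S"
    using ri_decrearr(1)[OF \<open>h \<in> S\<close>] le by (rule ri_solid(1))
  have "N (decrearr g) \<le> N h"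
    using ri_solid(2)[OF ri_decrearr(1)[OF \<open>h \<in> S\<close>] le] ri_decrearr(2)[OF \<open>h \<in> S\<close>] by simp
  have "equidist (decrearr g) g"
    using bounded_seq.distf_decrearr[OF g] by (simp add: equidist_def)
  with \<open>decrearr g \<in> S\<close> show "g \<in> S" and "N g \<le> N h"
    using ri_equidist[OF \<open>decrearr g \<in> S\<close>] \<open>N (decrearr g) \<le> N h\<close> by simp_all
qed

lemma indicator_lessThan_mem: "(indicator {..<m} :: seq) \<in> S"
proof (induction m)
  case 0
  then show ?case using ri_zero_mem by simp
next
  case (Suc m)
  have "(indicator {..<Suc m} :: seq) = (\<lambda>n. indicator {..<m} n + indicator {m} n)"
    by (auto simp: fun_eq_iff indicator_def)
  with Suc show ?case using ri_add_mem indicator_singleton_mem by simp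
qed

section \<open>Distance to the order continuous part\<close>

lemma finite_support_ord_cont:
  assumes "x \<in> S" and support: "\<And>n. m \<le> n \<Longrightarrow> x n = 0"
  shows "x \<in> ord_cont_part S N"
  unfolding ord_cont_part_def
proof (intro CollectI conjI allI impI)
  fix xs :: "nat \<Rightarrow> seq"
  assume "(\<forall>k n. 0 \<le> xs k n \<and> xs k n \<le> \<bar>x n\<bar>) \<and> (\<forall>n. decseq (\<lambda>k. xs k n)) \<and>
    (\<forall>n. (\<lambda>k. xs k n) \<longlonglongrightarrow> 0)"
  then have bounds: "\<And>k n. 0 \<le> xs k n \<and> xs k n \<le> \<bar>x n\<bar>"
    and lim: "\<And>n. (\<lambda>k. xs k n) \<longlonglongrightarrow> 0" by auto
  define s where "s k = (\<Sum>j<m. xs k j)" for k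
  have "s \<longlonglongrightarrow> (\<Sum>j<m. 0)"
    unfolding s_def by (rule tendsto_sum) (rule lim)
  then have lim_bound: "(\<lambda>k. s k * N (indicator {..<m})) \<longlonglongrightarrow> 0"
    by (simp add: tendsto_mult_left_zero)
  have upper: "N (xs k) \<le> s k * N (indicator {..<m})" for k
  proof -
    have "\<bar>xs k n\<bar> \<le> \<bar>s k * indicator {..<m} n\<bar>" for n
    proof (cases "n < m")
      case True
      then have "xs k n \<le> s k" unfolding s_def using bounds by (intro member_le_sum) auto
      then show ?thesis using True bounds by simp
    next
      case False
      then show ?thesis using bounds[of k n] support[of n] by simp
    qed
    moreover have "(\<lambda>n. s k * indicator {..<m} n) \<in> S"
      by (intro ri_scale_mem indicator_lessThan_mem)
    ultimately have "N (xs k) \<le> N (\<lambda>n. s k * indicator {..<m} n)"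
      by (rule ri_solid(2)[rotated])
    also have "\<dots> = s k * N (indicator {..<m})"
      using ri_norm_scale[OF indicator_lessThan_mem] bounds by (simp add: s_def sum_nonneg)
    finally show ?thesis .
  qed
  have lower: "0 \<le> N (xs k)" for k
    using ri_norm_nonneg ri_solid(1)[OF \<open>x \<in> S\<close>] bounds by simp
  show "(\<lambda>k. N (xs k)) \<longlonglongrightarrow> 0"
    using lower upper by (intro tendsto_sandwich[OF _ _ tendsto_const lim_bound]) simp_all
qed (fact \<open>x \<in> S\<close>)

lemma ord_cont_norm_tail_tendsto_zero:
  assumes "g \<in> ord_cont_part S N"
  shows "(\<lambda>m. N (seq_tail m g)) \<longlonglongrightarrow> 0"
proof -
  have "g \<in> S" using assms ord_cont_part_subset by blast
  have "(\<lambda>m. N (\<lambda>n. \<bar>seq_tail m g n\<bar>)) \<longlonglongrightarrow> 0"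
    using assms
  proof (rule ord_cont_partD)
    show "0 \<le> \<bar>seq_tail m g n\<bar>" for m n by simp
    show "\<bar>seq_tail m g n\<bar> \<le> \<bar>g n\<bar>" for m n
      by (simp add: seq_tail_def)
    show "decseq (\<lambda>m. \<bar>seq_tail m g n\<bar>)" for n
      by (rule decseq_SucI) (simp add: seq_tail_def)
    show "(\<lambda>m. \<bar>seq_tail m g n\<bar>) \<longlonglongrightarrow> 0" for n
    proof (rule tendsto_eventually)
      show "\<forall>\<^sub>F m in sequentially. \<bar>seq_tail m g n\<bar> = 0"
        unfolding eventually_sequentially by (intro exI[of _ "Suc n"]) (simp add: seq_tail_def)
    qed
  qed
  then show ?thesis
    using ri_norm_abs[OF seq_tail_mem[OF \<open>g \<in> S\<close>]] by simp
qed

lemma dist_Xa_le_norm_tail: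
  assumes "h \<in> S"
  shows "dist_Xa S N h \<le> N (seq_tail m h)"
proof -
  let ?prefix = "\<lambda>n. if n < m then h n else 0"
  have "?prefix \<in> S" using assms by (rule ri_solid(1)) simp
  then have "?prefix \<in> ord_cont_part S N" by (rule finite_support_ord_cont[where m = m]) simp
  moreover have "bdd_below ((\<lambda>g. N (\<lambda>n. h n - g n)) ` ord_cont_part S N)"
    using ord_cont_part_subset ri_norm_nonneg ri_diff_mem[OF assms]
    by (intro bdd_belowI2[of _ 0]) blast
  ultimately have "dist_Xa S N h \<le> N (\<lambda>n. h n - ?prefix n)"
    unfolding dist_Xa_def by (rule cINF_lower[rotated])
  also have "(\<lambda>n. h n - ?prefix n) = seq_tail m h" by (simp add: fun_eq_iff seq_tail_def)
  finally show ?thesis .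
qed

lemma bdd_below_norm_tail: "h \<in> S \<Longrightarrow> bdd_below (range (\<lambda>m. N (seq_tail m h)))"
  using ri_norm_nonneg seq_tail_mem by (intro bdd_belowI2[of _ 0]) blast

lemma INF_norm_tail_le_norm_diff:
  assumes "h \<in> S" and "g \<in> ord_cont_part S N"
  shows "(INF m. N (seq_tail m h)) \<le> N (\<lambda>n. h n - g n)"
proof -
  let ?d = "\<lambda>n. h n - g n"
  have "g \<in> S" using assms(2) ord_cont_part_subset by blast
  then have "?d \<in> S" using assms(1) by (intro ri_diff_mem)
  have "(INF m. N (seq_tail m h)) \<le> N ?d + N (seq_tail m g)" for m
  proof -
    have "(INF m. N (seq_tail m h)) \<le> N (seq_tail m h)"
      using bdd_below_norm_tail[OF assms(1)] by (rule cINF_lower) simp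
    also have "seq_tail m h = (\<lambda>n. seq_tail m ?d n + seq_tail m g n)"
      by (simp add: fun_eq_iff seq_tail_def)
    also have "N \<dots> \<le> N (seq_tail m ?d) + N (seq_tail m g)"
      using \<open>?d \<in> S\<close> \<open>g \<in> S\<close> by (intro ri_norm_triangle seq_tail_mem)
    also have "\<dots> \<le> N ?d + N (seq_tail m g)"
      using norm_seq_tail_le[OF \<open>?d \<in> S\<close>] by simp
    finally show ?thesis .
  qed
  moreover have "(\<lambda>m. N ?d + N (seq_tail m g)) \<longlonglongrightarrow> N ?d + 0"
    using ord_cont_norm_tail_tendsto_zero[OF assms(2)] by (intro tendsto_add tendsto_const)
  ultimately show ?thesis
    using LIMSEQ_le_const by fastforce
qed

lemma dist_Xa_eq_INF_norm_tail:
  assumes "h \<in> S"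
  shows "dist_Xa S N h = (INF m. N (seq_tail m h))"
proof (rule antisym)
  show "dist_Xa S N h \<le> (INF m. N (seq_tail m h))"
    using dist_Xa_le_norm_tail[OF assms] by (intro cINF_greatest) auto
  have "(\<lambda>n. 0) \<in> ord_cont_part S N"
    using ri_zero_mem by (rule finite_support_ord_cont) simp
  then show "(INF m. N (seq_tail m h)) \<le> dist_Xa S N h"
    unfolding dist_Xa_def using INF_norm_tail_le_norm_diff[OF assms]
    by (intro cINF_greatest) auto
qed

lemma norm_tail_decrearr_le:
  assumes "f \<in> S"
  shows "N (seq_tail m (decrearr f)) \<le> N (seq_tail m f)"
proof -
  interpret bounded_seq f "N f / N (indicator {0})" using assms by (rule ri_bounded_seq)
  show ?thesis
  proof (rule ri_le_of_distf_le(2)[OF seq_tail_mem[OF assms]])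
    show "distf (seq_tail m (decrearr f)) t \<le> distf (seq_tail m f) t" if "0 \<le> t" for t
      using that distf_diff_le_distf_tail by (simp add: distf_tail_decrearr)
  qed
qed

lemma exists_norm_tail_le_norm_tail_decrearr:
  assumes "f \<in> S"
  shows "\<exists>m'. N (seq_tail m' f) \<le> N (seq_tail m (decrearr f))"
proof -
  interpret bounded_seq f "N f / N (indicator {0})" using assms by (rule ri_bounded_seq)
  obtain m' where "\<forall>t\<ge>0. distf (seq_tail m' f) t \<le> distf f t - enat m"
    using exists_tail_distf_le by blast
  then have "N (seq_tail m' f) \<le> N (seq_tail m (decrearr f))"
    using seq_tail_mem[OF ri_decrearr(1)[OF assms]]
    by (intro ri_le_of_distf_le(2)) (simp_all add: distf_tail_decrearr)
  then show ?thesis ..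
qed

lemma INF_norm_tail_decrearr:
  assumes "f \<in> S"
  shows "(INF m. N (seq_tail m (decrearr f))) = (INF m. N (seq_tail m f))"
proof (rule antisym)
  show "(INF m. N (seq_tail m (decrearr f))) \<le> (INF m. N (seq_tail m f))"
    using bdd_below_norm_tail[OF ri_decrearr(1)[OF assms]] norm_tail_decrearr_le[OF assms]
    by (intro cINF_mono) auto
  show "(INF m. N (seq_tail m f)) \<le> (INF m. N (seq_tail m (decrearr f)))"
    using bdd_below_norm_tail[OF assms] exists_norm_tail_le_norm_tail_decrearr[OF assms]
    by (intro cINF_mono) auto
qed

end

theorem theorem3p6:
  fixes S :: "(nat \<Rightarrow> real) set" and N :: "(nat \<Rightarrow> real) \<Rightarrow> real" and f :: "nat \<Rightarrow> real"
  assumes "ri_space S N" and "fatou S N" and "f \<in> S"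
  shows "dist_Xa S N (decrearr f) = dist_Xa S N f"
proof -
  note ri = \<open>ri_space S N\<close> and fS = \<open>f \<in> S\<close>
  have "dist_Xa S N (decrearr f) = (INF m. N (seq_tail m (decrearr f)))"
    by (rule dist_Xa_eq_INF_norm_tail[OF ri ri_decrearr(1)[OF ri fS]])
  also have "\<dots> = (INF m. N (seq_tail m f))" by (rule INF_norm_tail_decrearr[OF ri fS])
  also have "\<dots> = dist_Xa S N f" by (rule dist_Xa_eq_INF_norm_tail[OF ri fS, symmetric])
  finally show ?thesis .
qed

end
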